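(* For all integers $1\le k\le n$, $\hat E_{k,n}(-1)=\pm\binom{n-1}{k-1}$.
   Context: Place $1,\dots,n$ clockwise on a circle. Distinct $p_1,\dots,p_m$ are in clockwise cyclic order if $(p_2-p_1)\bmod n<\dots<(p_m-p_1)\bmod n$ (residues in $\{0,\dots,n-1\}$). For $\pi\in S_n$ (fixed points regarded as "counterclockwise loops"), an ordered pair $(i,j)$, $i\ne j$, is aligned if $\pi(j)\ne j$, the entries of $(i,\pi(i),\pi(j),j)$ are pairwise distinct except that possibly $i=\pi(i)$, and the distinct entries in this order are in clockwise cyclic order. An alignment is an unordered pair $\{i,j\}$ with $(i,j)$ or $(j,i)$ aligned; $\mathrm{al}(\pi)$ is their number. A weak excedence of $\pi$ is an $i$ with $\pi(i)\ge i$. $E_{k,n}(q)=\sum q^{k(n-k)-\mathrm{al}(\pi)}$ over $\pi\in S_n$ with exactly $k$ weak excedences, and $\hat E_{k,n}(q)=q^{k-n}E_{k,n}(q)$. *)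

theory Defs
  imports Complex_Main "HOL-Combinatorics.Permutations"
begin

text \<open>Points 1..n on a circle. A list of points is in clockwise cyclic order if
  the entries are distinct and the residues (p_i - p_1) mod n, i = 2..m, strictly increase.\<close>
definition cw_order :: "nat \<Rightarrow> nat list \<Rightarrow> bool" where
  "cw_order n ps \<longleftrightarrow> distinct ps \<and>
     sorted_wrt (<) (map (\<lambda>p. (int p - int (hd ps)) mod int n) (tl ps))"

definition aligned :: "nat \<Rightarrow> (nat \<Rightarrow> nat) \<Rightarrow> nat \<Rightarrow> nat \<Rightarrow> bool" where
  "aligned n \<pi> i j \<longleftrightarrow> i \<noteq> j \<and> \<pi> j \<noteq> j \<and>
     cw_order n (if \<pi> i = i then [i, \<pi> j, j] else [i, \<pi> i, \<pi> j, j])"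

definition al :: "nat \<Rightarrow> (nat \<Rightarrow> nat) \<Rightarrow> nat" where
  "al n \<pi> = card {{i, j} | i j. i \<in> {1..n} \<and> j \<in> {1..n} \<and> aligned n \<pi> i j}"

definition wex :: "nat \<Rightarrow> (nat \<Rightarrow> nat) \<Rightarrow> nat" where
  "wex n \<pi> = card {i \<in> {1..n}. \<pi> i \<ge> i}"

definition E_poly :: "nat \<Rightarrow> nat \<Rightarrow> real \<Rightarrow> real" where
  "E_poly k n q = (\<Sum>\<pi> \<in> {\<pi>. \<pi> permutes {1..n} \<and> wex n \<pi> = k}.
        q powi (int (k * (n - k)) - int (al n \<pi>)))"

definition E_hat :: "nat \<Rightarrow> nat \<Rightarrow> real \<Rightarrow> real" where
  "E_hat k n q = q powi (int k - int n) * E_poly k n q"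

end

theory Submission
  imports Defs
begin

text \<open>At q = -1 every term of E_{k,n} is a sign. For i < j, the pair {i, j} is an alignment
  of \<pi> exactly when either it is an inversion of \<pi> or exactly one of i, j is a weak
  excedance, but not both. Hence (-1)^al(\<pi>) = sign(\<pi>) (-1)^(k(n-k)), so E_{k,n}(-1) is the
  signed count of the permutations of [n] with k weak excedances. Obtaining the permutations of
  [n+1] from those of [n] by inserting n+1 into a cycle gives a recursion for these signed counts,
  whose solution is (-1)^(n-k) C(n-1, k-1).\<close>

section \<open>Inversions and the sign of a permutation\<close>

definition ordered_pairs :: "'a::linorder set \<Rightarrow> ('a \<times> 'a) set" where
  "ordered_pairs S = {(i, j) \<in> S \<times> S. i < j}"

lemma finite_ordered_pairs [simp]: "finite S \<Longrightarrow> finite (ordered_pairs S)"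
  unfolding ordered_pairs_def by (rule finite_subset[of _ "S \<times> S"]) auto

lemma card_doubletons_eq_card_ordered_pairs:
  fixes S :: "'a::linorder set"
  assumes "\<And>i. \<not> R i i"
  shows "card {{i, j} | i j. i \<in> S \<and> j \<in> S \<and> R i j}
       = card {(i, j) \<in> ordered_pairs S. R i j \<or> R j i}"
proof -
  let ?P = "{(i, j) \<in> ordered_pairs S. R i j \<or> R j i}"
  have "{{i, j} | i j. i \<in> S \<and> j \<in> S \<and> R i j} = (\<lambda>(i, j). {i, j}) ` ?P"
  proof (intro equalityI subsetI)
    fix e assume "e \<in> {{i, j} | i j. i \<in> S \<and> j \<in> S \<and> R i j}"
    then obtain i j where e: "e = {i, j}" "i \<in> S" "j \<in> S" "R i j" by blast
    consider "i < j" | "j < i"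
      using assms e(4) by (metis linorder_neqE)
    then show "e \<in> (\<lambda>(i, j). {i, j}) ` ?P"
    proof cases
      case 1
      with e show ?thesis
        by (intro image_eqI[of _ _ "(i, j)"]) (auto simp: ordered_pairs_def)
    next
      case 2
      with e show ?thesis
        by (intro image_eqI[of _ _ "(j, i)"]) (auto simp: ordered_pairs_def)
    qed
  next
    fix e assume "e \<in> (\<lambda>(i, j). {i, j}) ` ?P"
    then obtain i j where e: "e = {i, j}" "i \<in> S" "j \<in> S" "R i j \<or> R j i"
      by (auto simp: ordered_pairs_def)
    moreover have "e = {j, i}"
      using e(1) by (simp add: insert_commute)
    ultimately show "e \<in> {{i, j} | i j. i \<in> S \<and> j \<in> S \<and> R i j}"
      by blast
  qed
  moreover have "inj_on (\<lambda>(i, j). {i, j}) ?P"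
    unfolding inj_on_def ordered_pairs_def by (clarsimp simp: doubleton_eq_iff) (metis less_asym)
  ultimately show ?thesis by (simp add: card_image)
qed

lemma card_ordered_pairs_permute:
  fixes S :: "'a::linorder set"
  assumes p: "p permutes S" and "\<And>u v. R u v = R v u" and "\<And>u. \<not> R u u"
  shows "card {(i, j) \<in> ordered_pairs S. R (p i) (p j)} = card {(i, j) \<in> ordered_pairs S. R i j}"
proof -
  let ?D = "\<lambda>R. {{i, j} | i j. i \<in> S \<and> j \<in> S \<and> R i j}"
  have image_eq: "(`) p ` ?D (\<lambda>i j. R (p i) (p j)) = ?D R"
  proof (intro equalityI subsetI)
    fix e assume "e \<in> (`) p ` ?D (\<lambda>i j. R (p i) (p j))"
    then obtain i j where "e = {p i, p j}" "i \<in> S" "j \<in> S" "R (p i) (p j)"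
      by auto
    moreover have "p i \<in> S" "p j \<in> S"
      using \<open>i \<in> S\<close> \<open>j \<in> S\<close> by (simp_all add: permutes_in_image[OF p])
    ultimately show "e \<in> ?D R"
      by blast
  next
    fix e assume "e \<in> ?D R"
    then obtain u v where e: "e = {u, v}" "u \<in> S" "v \<in> S" "R u v"
      by blast
    let ?i = "inv p u" and ?j = "inv p v"
    have "p ?i = u" "p ?j = v"
      using permutes_inverses(1)[OF p] by simp_all
    moreover have "?i \<in> S" "?j \<in> S"
      using e(2,3) permutes_in_image[OF permutes_inv[OF p]] by simp_all
    ultimately have "{?i, ?j} \<in> ?D (\<lambda>i j. R (p i) (p j))"
      using e(4) by force
    moreover have "e = (`) p {?i, ?j}"
      using e(1) \<open>p ?i = u\<close> \<open>p ?j = v\<close> by simp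
    ultimately show "e \<in> (`) p ` ?D (\<lambda>i j. R (p i) (p j))"
      by blast
  qed
  have "inj_on ((`) p) A" for A
    by (rule inj_onI) (simp add: inj_image_eq_iff[OF permutes_inj[OF p]])
  then have "card (?D R) = card (?D (\<lambda>i j. R (p i) (p j)))"
    by (simp only: card_image flip: image_eq)
  then show ?thesis
    using card_doubletons_eq_card_ordered_pairs[of "\<lambda>i j. R (p i) (p j)" S]
      card_doubletons_eq_card_ordered_pairs[of R S] assms(2,3)
    by simp
qed

lemma minus_one_power_card_xor:
  assumes "finite A"
  shows "(-1::int) ^ card {x \<in> A. P x \<noteq> Q x} = (-1) ^ card {x \<in> A. P x} * (-1) ^ card {x \<in> A. Q x}"
proof -
  have sign_prod: "(-1::int) ^ card {x \<in> A. R x} = (\<Prod>x\<in>A. if R x then -1 else 1)" for R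
    using prod.inter_filter[OF assms, of "\<lambda>_. -1" R] by simp
  show ?thesis
    unfolding sign_prod prod.distrib[symmetric] by (intro prod.cong) auto
qed

definition inversions :: "'a::linorder set \<Rightarrow> ('a \<Rightarrow> 'b::linorder) \<Rightarrow> ('a \<times> 'a) set" where
  "inversions S f = {(i, j) \<in> ordered_pairs S. f j < f i}"

lemma minus_one_power_inversions_compose:
  fixes S :: "'a::linorder set"
  assumes "finite S" and p: "p permutes S" and t: "t permutes S"
  shows "(-1::int) ^ card (inversions S (t \<circ> p))
       = (-1) ^ card (inversions S t) * (-1) ^ card (inversions S p)"
proof -
  \<comment> \<open>\<open>(i, j)\<close> is an inversion of \<open>t \<circ> p\<close> iff it is one of \<open>p\<close> xor \<open>R (p i) (p j)\<close>.\<close>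
  define R where "R u v \<longleftrightarrow> (t v < t u) \<noteq> (v < u)" for u v
  have "R u v = R v u" for u v
  proof (cases "u = v")
    case False
    then have "t u \<noteq> t v"
      using permutes_inj[OF t] by (auto simp: inj_eq)
    with False show ?thesis
      unfolding R_def by auto
  qed simp
  moreover have "\<not> R u u" for u
    unfolding R_def by simp
  ultimately have "card {(i, j) \<in> ordered_pairs S. R (p i) (p j)} = card {(i, j) \<in> ordered_pairs S. R i j}"
    by (rule card_ordered_pairs_permute[OF p])
  also have "{(i, j) \<in> ordered_pairs S. R i j} = inversions S t"
    unfolding inversions_def R_def ordered_pairs_def by auto
  finally have "card {(i, j) \<in> ordered_pairs S. R (p i) (p j)} = card (inversions S t)" .
  moreover have "inversions S (t \<circ> p)
      = {x \<in> ordered_pairs S. (case x of (i, j) \<Rightarrow> p j < p i) \<noteq> (case x of (i, j) \<Rightarrow> R (p i) (p j))}"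
    unfolding inversions_def R_def by auto
  ultimately show ?thesis
    using minus_one_power_card_xor[of "ordered_pairs S" "\<lambda>(i, j). p j < p i" "\<lambda>(i, j). R (p i) (p j)"]
      \<open>finite S\<close> by (simp add: inversions_def case_prod_unfold)
qed

lemma odd_card_inversions_transpose:
  fixes S :: "'a::linorder set"
  assumes "finite S" and "a \<in> S" "b \<in> S" "a < b"
  shows "odd (card (inversions S (transpose a b)))"
proof -
  let ?X = "{v \<in> S. a < v \<and> v < b}"
  have inversions_eq: "inversions S (transpose a b) = Pair a ` insert b ?X \<union> (\<lambda>u. (u, b)) ` ?X"
    using assms(2-4) unfolding inversions_def ordered_pairs_def
    by (auto simp: transpose_def split: if_splits)
  have "card (inversions S (transpose a b)) = card (Pair a ` insert b ?X) + card ((\<lambda>u. (u, b)) ` ?X)"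
    unfolding inversions_eq using assms(1) by (intro card_Un_disjoint) auto
  also have "\<dots> = card (insert b ?X) + card ?X"
    by (intro arg_cong2[where f = "(+)"] card_image) (auto simp: inj_on_def)
  also have "\<dots> = 2 * card ?X + 1"
    using assms(1) by simp
  finally show ?thesis by simp
qed

theorem sign_eq_inversions:
  fixes S :: "'a::linorder set"
  assumes "finite S" and "p permutes S"
  shows "sign p = (-1) ^ card (inversions S p)"
  using assms(2,1)
proof (induction rule: permutes_induct)
  case id
  have "inversions S id = {}"
    unfolding inversions_def ordered_pairs_def by auto
  then show ?case by (simp only: sign_id card.empty power_0)
next
  case (swap a b p)
  have t: "transpose a b permutes S"
    using swap.hyps by (simp add: permutes_swap_id)
  have "odd (card (inversions S (transpose a b)))"
    using odd_card_inversions_transpose[OF \<open>finite S\<close>, of a b]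
      odd_card_inversions_transpose[OF \<open>finite S\<close>, of b a] swap.hyps(1-3)
    by (cases "a < b") (auto simp: transpose_commute[of b a])
  then have "(-1::int) ^ card (inversions S (transpose a b \<circ> p)) = - sign p"
    using minus_one_power_inversions_compose[OF \<open>finite S\<close> swap.hyps(4) t] swap.IH by simp
  moreover have "sign (transpose a b \<circ> p) = - sign p"
    using swap.hyps permutes_imp_permutation[OF \<open>finite S\<close>] t
    by (simp add: sign_compose sign_swap_id)
  ultimately show ?case by (simp only:)
qed

section \<open>The parity of the number of alignments\<close>

lemma int_diff_mod_eq:
  assumes "p \<in> {1..n}" "q \<in> {1..n}"
  shows "(int p - int q) mod int n = (if q \<le> p then int p - int q else int p - int q + int n)"
proof (cases "q \<le> p")
  case False
  have "(int p - int q) mod int n = (int p - int q + int n) mod int n"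
    by simp
  also have "\<dots> = int p - int q + int n"
    using assms False by (intro mod_pos_pos_trivial) auto
  finally show ?thesis
    using False by simp
qed (use assms in \<open>simp add: mod_pos_pos_trivial\<close>)

lemma aligned_or_aligned_iff:
  assumes "\<pi> permutes {1..n}" and "i \<in> {1..n}" "j \<in> {1..n}" "i < j"
  shows "aligned n \<pi> i j \<or> aligned n \<pi> j i \<longleftrightarrow> (\<pi> j < \<pi> i) \<noteq> ((i \<le> \<pi> i) \<noteq> (j \<le> \<pi> j))"
proof -
  have "\<pi> i \<in> {1..n}" "\<pi> j \<in> {1..n}"
    using assms(1-3) by (simp_all only: permutes_in_image)
  moreover have "\<pi> i \<noteq> \<pi> j"
    using assms(1,4) by (simp add: permutes_inj inj_eq)
  ultimately show ?thesis
    using assms(2-4) unfolding aligned_def cw_order_def by (auto simp: int_diff_mod_eq)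
qed

lemma al_eq_card_ordered_pairs:
  "al n \<pi> = card {(i, j) \<in> ordered_pairs {1..n}. aligned n \<pi> i j \<or> aligned n \<pi> j i}"
  unfolding al_def by (rule card_doubletons_eq_card_ordered_pairs) (simp add: aligned_def)

lemma card_ordered_pairs_separated:
  fixes S :: "'a::linorder set"
  assumes "finite S"
  shows "card {(i, j) \<in> ordered_pairs S. P i \<noteq> P j} = card {i \<in> S. P i} * card {i \<in> S. \<not> P i}"
proof -
  let ?O = "{(i, j) \<in> ordered_pairs S. P i \<noteq> P j}"
  let ?g = "\<lambda>(i, j). if P i then (i, j) else (j, i)"
  have "inj_on ?g ?O"
    by (rule inj_onI) (auto simp: ordered_pairs_def split: if_splits)
  then have "card ?O = card (?g ` ?O)"
    by (rule card_image[symmetric])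
  also have "?g ` ?O = {i \<in> S. P i} \<times> {i \<in> S. \<not> P i}"
  proof (intro equalityI subsetI)
    fix x assume "x \<in> {i \<in> S. P i} \<times> {i \<in> S. \<not> P i}"
    then obtain a b where ab: "x = (a, b)" "a \<in> S" "b \<in> S" "P a" "\<not> P b"
      by auto
    then consider "a < b" | "b < a"
      by (metis linorder_neqE)
    then show "x \<in> ?g ` ?O"
    proof cases
      case 1
      with ab show ?thesis
        by (intro image_eqI[of _ _ "(a, b)"]) (auto simp: ordered_pairs_def)
    next
      case 2
      with ab show ?thesis
        by (intro image_eqI[of _ _ "(b, a)"]) (auto simp: ordered_pairs_def)
    qed
  qed (auto simp: ordered_pairs_def split: if_splits)
  finally show ?thesis
    by (simp add: card_cartesian_product)
qed

lemma card_not_wex: "card {i \<in> {1..n}. \<pi> i < i} = n - wex n \<pi>"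
proof -
  have "{i \<in> {1..n}. \<pi> i < i} = {1..n} - {i \<in> {1..n}. i \<le> \<pi> i}"
    by auto
  also have "card \<dots> = n - wex n \<pi>"
    unfolding wex_def by (subst card_Diff_subset) auto
  finally show ?thesis .
qed

lemma minus_one_power_al:
  assumes \<pi>: "\<pi> permutes {1..n}"
  shows "(-1::int) ^ al n \<pi> = sign \<pi> * (-1) ^ (wex n \<pi> * (n - wex n \<pi>))"
proof -
  let ?P = "ordered_pairs {1..n::nat}"
  have "{(i, j) \<in> ?P. aligned n \<pi> i j \<or> aligned n \<pi> j i}
      = {x \<in> ?P. (case x of (i, j) \<Rightarrow> \<pi> j < \<pi> i) \<noteq> (case x of (i, j) \<Rightarrow> (i \<le> \<pi> i) \<noteq> (j \<le> \<pi> j))}"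
    using aligned_or_aligned_iff[OF \<pi>] by (auto simp: ordered_pairs_def)
  then have "(-1::int) ^ al n \<pi>
      = (-1) ^ card (inversions {1..n} \<pi>) * (-1) ^ card {(i, j) \<in> ?P. (i \<le> \<pi> i) \<noteq> (j \<le> \<pi> j)}"
    using minus_one_power_card_xor[of ?P "\<lambda>(i, j). \<pi> j < \<pi> i" "\<lambda>(i, j). (i \<le> \<pi> i) \<noteq> (j \<le> \<pi> j)"]
    by (simp add: al_eq_card_ordered_pairs inversions_def case_prod_unfold)
  also have "card {(i, j) \<in> ?P. (i \<le> \<pi> i) \<noteq> (j \<le> \<pi> j)} = wex n \<pi> * (n - wex n \<pi>)"
    using card_ordered_pairs_separated[of "{1..n}" "\<lambda>i. i \<le> \<pi> i"] card_not_wex[of n \<pi>]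
    by (simp add: wex_def not_le)
  finally show ?thesis
    using sign_eq_inversions[OF _ \<pi>] by simp
qed

section \<open>Signed counts of permutations by weak excedances\<close>

lemma wex_Suc_fixed:
  assumes "q permutes {1..n}"
  shows "wex (Suc n) q = Suc (wex n q)"
proof -
  have "q (Suc n) = Suc n"
    using assms by (simp add: permutes_not_in)
  then have "{i \<in> {1..Suc n}. i \<le> q i} = insert (Suc n) {i \<in> {1..n}. i \<le> q i}"
    by (auto simp: le_Suc_eq)
  then show ?thesis
    unfolding wex_def by simp
qed

text \<open>\<open>transpose (Suc n) (q c) \<circ> q\<close> inserts \<open>Suc n\<close> into the cycle of \<open>q\<close> between \<open>c\<close> and \<open>q c\<close>.\<close>

lemma wex_Suc_transpose:
  assumes q: "q permutes {1..n}" and c: "c \<in> {1..n}"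
  shows "wex (Suc n) (transpose (Suc n) (q c) \<circ> q) = wex n q + of_bool (q c < c)"
proof -
  let ?p = "transpose (Suc n) (q c) \<circ> q"
  have q_Suc: "q (Suc n) = Suc n"
    using q by (simp add: permutes_not_in)
  have qc: "q c \<in> {1..n}"
    using c by (simp only: permutes_in_image[OF q])
  have "?p i = (if i = c then Suc n else if i = Suc n then q c else q i)" for i
    using permutes_inj[OF q] q_Suc qc by (auto simp: transpose_def inj_eq) (metis injD)
  then have "{i \<in> {1..Suc n}. i \<le> ?p i} = insert c {i \<in> {1..n}. i \<le> q i}"
    using c qc by (auto simp: le_Suc_eq)
  then show ?thesis
    unfolding wex_def using c by (simp add: card_insert_if not_less)
qed

definition signed_wex_count :: "nat \<Rightarrow> nat \<Rightarrow> int" where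
  "signed_wex_count n k = (\<Sum>p | p permutes {1..n} \<and> wex n p = k. sign p)"

lemma signed_wex_count_eq_sum:
  "signed_wex_count n k = (\<Sum>p | p permutes {1..n}. if wex n p = k then sign p else 0)"
proof -
  have "finite {p. p permutes {1..n}}"
    by (simp add: finite_permutations)
  from sum.inter_filter[OF this, of sign "\<lambda>p. wex n p = k"] show ?thesis
    unfolding signed_wex_count_def by (simp only: mem_Collect_eq)
qed

lemma sum_sign_wex_transpose_Suc:
  assumes q: "q permutes {1..n}"
  shows "(\<Sum>b\<in>{1..n}. if wex (Suc n) (transpose (Suc n) b \<circ> q) = k then sign (transpose (Suc n) b \<circ> q) else 0)
       = - sign q * (int (n - wex n q) * of_bool (wex n q + 1 = k) + int (wex n q) * of_bool (wex n q = k))"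
proof -
  have q_Suc: "q permutes {1..Suc n}"
    using q by (rule permutes_subset) auto
  have sign_transpose: "sign (transpose (Suc n) (q c) \<circ> q) = - sign q" if "c \<in> {1..n}" for c
  proof -
    have "q c \<in> {1..n}"
      using that by (simp only: permutes_in_image[OF q])
    then have "q c \<noteq> Suc n"
      by simp
    then show ?thesis
      using permutes_imp_permutation[OF _ q_Suc]
      by (simp add: sign_compose sign_swap_id permutation_swap_id)
  qed
  have "(\<Sum>b\<in>{1..n}. if wex (Suc n) (transpose (Suc n) b \<circ> q) = k then sign (transpose (Suc n) b \<circ> q) else 0)
      = (\<Sum>c\<in>{1..n}. if wex (Suc n) (transpose (Suc n) (q c) \<circ> q) = k then sign (transpose (Suc n) (q c) \<circ> q) else 0)"
    by (rule sum.reindex_bij_betw[OF permutes_imp_bij[OF q], symmetric])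
  also have "\<dots> = (\<Sum>c\<in>{1..n}. - sign q * (if q c < c then of_bool (wex n q + 1 = k) else of_bool (wex n q = k)))"
    by (intro sum.cong refl) (simp add: sign_transpose wex_Suc_transpose[OF q])
  also have "\<dots> = - sign q * (\<Sum>c\<in>{1..n}. if q c < c then of_bool (wex n q + 1 = k) else of_bool (wex n q = k))"
    by (simp only: sum_distrib_left)
  also have "(\<Sum>c\<in>{1..n}. if q c < c then of_bool (wex n q + 1 = k) else of_bool (wex n q = k))
      = int (card {c \<in> {1..n}. q c < c}) * of_bool (wex n q + 1 = k)
        + int (card {c \<in> {1..n}. \<not> q c < c}) * of_bool (wex n q = k)"
    by (simp add: sum.If_cases Int_def conj_commute)
  also have "card {c \<in> {1..n}. \<not> q c < c} = wex n q"
    unfolding wex_def by (simp add: not_less)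
  finally show ?thesis
    by (simp only: card_not_wex)
qed

lemma signed_wex_count_Suc:
  "signed_wex_count (Suc n) k = (\<Sum>q | q permutes {1..n}.
     sign q * (of_bool (wex n q + 1 = k) * (1 - int (n - wex n q)) - of_bool (wex n q = k) * int (wex n q)))"
proof -
  let ?g = "\<lambda>p. if wex (Suc n) p = k then sign p else 0"
  have "signed_wex_count (Suc n) k
      = (\<Sum>b\<in>insert (Suc n) {1..n}. \<Sum>q | q permutes {1..n}. ?g (transpose (Suc n) b \<circ> q))"
  proof -
    have "{1..Suc n} = insert (Suc n) {1..n}"
      by auto
    then show ?thesis
      unfolding signed_wex_count_eq_sum by (simp only:) (rule sum_over_permutations_insert; simp)
  qed
  also have "\<dots> = (\<Sum>q | q permutes {1..n}. ?g q) + (\<Sum>b\<in>{1..n}. \<Sum>q | q permutes {1..n}. ?g (transpose (Suc n) b \<circ> q))"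
    by (simp add: sum.insert cong: if_cong)
  also have "\<dots> = (\<Sum>q | q permutes {1..n}. ?g q + (\<Sum>b\<in>{1..n}. ?g (transpose (Suc n) b \<circ> q)))"
    by (simp only: sum.distrib sum.swap[of _ "{1..n}"])
  also have "\<dots> = (\<Sum>q | q permutes {1..n}.
     sign q * (of_bool (wex n q + 1 = k) * (1 - int (n - wex n q)) - of_bool (wex n q = k) * int (wex n q)))"
  proof (intro sum.cong refl)
    fix q assume "q \<in> {q. q permutes {1..n}}"
    then have q: "q permutes {1..n}"
      by simp
    show "?g q + (\<Sum>b\<in>{1..n}. ?g (transpose (Suc n) b \<circ> q))
        = sign q * (of_bool (wex n q + 1 = k) * (1 - int (n - wex n q)) - of_bool (wex n q = k) * int (wex n q))"
      unfolding sum_sign_wex_transpose_Suc[OF q] wex_Suc_fixed[OF q] by (simp add: algebra_simps)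
  qed
  finally show ?thesis .
qed

lemma signed_wex_count_Suc_0: "signed_wex_count (Suc n) 0 = 0"
  unfolding signed_wex_count_Suc by (intro sum.neutral) auto

lemma signed_wex_count_Suc_Suc:
  "signed_wex_count (Suc n) (Suc j)
     = (1 - int (n - j)) * signed_wex_count n j - int (Suc j) * signed_wex_count n (Suc j)"
  unfolding signed_wex_count_Suc
  unfolding signed_wex_count_eq_sum sum_distrib_left sum_subtractf[symmetric]
  by (intro sum.cong refl) (auto simp: algebra_simps)

lemma signed_wex_count_one: "signed_wex_count (Suc 0) k = of_bool (k = 1)"
  unfolding signed_wex_count_Suc by (simp add: wex_def)

lemma signed_wex_count_closed_form:
  "signed_wex_count (Suc m) (Suc j) = (-1) ^ (m + j) * int (m choose j)"
proof (induction m arbitrary: j)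
  case 0
  then show ?case
    by (simp add: signed_wex_count_one)
next
  case (Suc m)
  show ?case
  proof (cases j)
    case 0
    then show ?thesis
      using Suc.IH[of 0] by (simp add: signed_wex_count_Suc_Suc signed_wex_count_Suc_0)
  next
    case (Suc i)
    have "Suc i * (m choose Suc i) = (m - i) * (m choose i)"
      by (simp only: binomial_absorption binomial_absorb_comp)
    then have absorb: "int (Suc i) * int (m choose Suc i) = int (m - i) * int (m choose i)"
      by (metis of_nat_mult)
    have "signed_wex_count (Suc (Suc m)) (Suc j)
        = (1 - int (m - i)) * ((-1) ^ (m + i) * int (m choose i))
          - int (Suc (Suc i)) * ((-1) ^ (m + Suc i) * int (m choose Suc i))"
      unfolding Suc using signed_wex_count_Suc_Suc[of "Suc m" "Suc i"] Suc.IH[of i] Suc.IH[of "Suc i"]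
      by simp
    also have "\<dots> = (-1) ^ (m + i) * (int (m choose i) + int (m choose Suc i)
        + (int (Suc i) * int (m choose Suc i) - int (m - i) * int (m choose i)))"
      by (simp add: algebra_simps)
    also have "\<dots> = (-1) ^ (m + i) * (int (m choose i) + int (m choose Suc i))"
      unfolding absorb by simp
    also have "\<dots> = (-1) ^ (Suc m + j) * int (Suc m choose j)"
      unfolding Suc by simp
    finally show ?thesis .
  qed
qed

lemma minus_one_powi_diff: "(-1::'a::division_ring) powi (int a - int b) = (-1) ^ (a + b)"
  by (simp add: power_int_minus_left even_diff minus_one_power_iff)

lemma E_poly_minus_one: "E_poly k n (-1) = of_int (signed_wex_count n k)"
proof -
  have "(-1::real) powi (int (k * (n - k)) - int (al n \<pi>)) = of_int (sign \<pi>)"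
    if "\<pi> permutes {1..n}" and "wex n \<pi> = k" for \<pi>
  proof -
    have "(-1::int) ^ (k * (n - k) + al n \<pi>) = sign \<pi> * ((-1) ^ (k * (n - k)) * (-1) ^ (k * (n - k)))"
      using minus_one_power_al[OF that(1)] that(2) by (simp add: power_add)
    also have "\<dots> = sign \<pi>"
      by (simp flip: power_add)
    finally have "(-1::int) ^ (k * (n - k) + al n \<pi>) = sign \<pi>" .
    then show ?thesis
      unfolding minus_one_powi_diff using arg_cong[of _ _ "of_int :: int \<Rightarrow> real"] by fastforce
  qed
  then show ?thesis
    unfolding E_poly_def signed_wex_count_def by (simp add: of_int_sum)
qed

theorem mainTheorem12:
  fixes k n :: nat
  assumes "1 \<le> k" and "k \<le> n"
  shows "E_hat k n (-1) = real ((n - 1) choose (k - 1)) \<or>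
         E_hat k n (-1) = - real ((n - 1) choose (k - 1))"
proof -
  obtain j where k: "k = Suc j"
    using assms(1) by (cases k) auto
  obtain m where n: "n = Suc m"
    using assms by (cases n) auto
  have "E_hat k n (-1) = (-1) ^ (k + n) * ((-1) ^ (m + j) * real (m choose j))"
    unfolding E_hat_def E_poly_minus_one minus_one_powi_diff k n signed_wex_count_closed_form
    by simp
  also have "\<dots> = real ((n - 1) choose (k - 1))"
    unfolding k n by (simp add: minus_one_power_iff)
  finally show ?thesis ..
qed

end
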